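(* Let $H=\langle a,b \mid c=[b,a],\ [c,a]=[c,b]=1\rangle$, in which every element is uniquely of the form $a^mb^nc^k$ with $m,n,k\in\mathbb{Z}$. The function $\phi\colon H\to\mathbb{R}$ defined by $\phi(a^mb^nc^k)=mn-2k$ satisfies $\phi(1)=0$ and $\phi(xy)+\phi(xy^{-1})=2\phi(x)$ for all $x,y\in H$, i.e. $\phi\in J_0(H)$.
   Context: $[x,y]=x^{-1}y^{-1}xy$. $J_0(H)$ denotes the space of functions $f\colon H\to\mathbb{R}$ with $f(xy)+f(xy^{-1})=2f(x)$ for all $x,y\in H$ and $f(1)=0$. *)

theory Defs
  imports Complex_Main "HOL-Algebra.Group"
begin

text \<open>Concrete model of the discrete Heisenberg group
  H = < a, b | c = [b,a], [c,a] = [c,b] = 1 >, with [x,y] = x^-1 y^-1 x y.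
  The triple (m,n,k) stands for the normal form a^m b^n c^k.
  From c = b^-1 a^-1 b a we get b a = a b c, hence b^n a^p = a^p b^n c^(n p), so
  (a^m b^n c^k)(a^p b^q c^l) = a^(m+p) b^(n+q) c^(k+l+n p).\<close>

definition heis :: "(int \<times> int \<times> int) monoid" where
  "heis = \<lparr> carrier = UNIV,
            mult = (\<lambda>(m, n, k) (p, q, l). (m + p, n + q, k + l + n * p)),
            one = (0, 0, 0) \<rparr>"

definition heis_a :: "int \<times> int \<times> int" where "heis_a = (1, 0, 0)"
definition heis_b :: "int \<times> int \<times> int" where "heis_b = (0, 1, 0)"
definition heis_c :: "int \<times> int \<times> int" where "heis_c = (0, 0, 1)"

definition J0 :: "('a, 'b) monoid_scheme \<Rightarrow> ('a \<Rightarrow> real) set" where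
  "J0 G = {f. (\<forall>x\<in>carrier G. \<forall>y\<in>carrier G.
                 f (x \<otimes>\<^bsub>G\<^esub> y) + f (x \<otimes>\<^bsub>G\<^esub> inv\<^bsub>G\<^esub> y) = 2 * f x)
              \<and> f \<one>\<^bsub>G\<^esub> = 0}"

definition heis_phi :: "int \<times> int \<times> int \<Rightarrow> real" where
  "heis_phi = (\<lambda>(m, n, k). real_of_int (m * n - 2 * k))"

end

theory Submission
  imports Defs
begin

text \<open>For x = (m, n, k) and y = (p, q, l) we have y^-1 = (-p, -q, p q - l).
  Summing phi(xy) and phi(xy^-1), the cross terms m q + n p and the cocycle terms
  \<plusminus>n p cancel, and the p q from (m \<plusminus> p)(n \<plusminus> q) is cancelled by the
  c-coordinate p q of y^-1, leaving 2 phi(x).\<close>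

lemma heis_carrier [simp]: "carrier heis = UNIV"
  by (simp add: heis_def)

lemma heis_one [simp]: "\<one>\<^bsub>heis\<^esub> = (0, 0, 0)"
  by (simp add: heis_def)

lemma heis_mult [simp]: "(m, n, k) \<otimes>\<^bsub>heis\<^esub> (p, q, l) = (m + p, n + q, k + l + n * p)"
  by (simp add: heis_def)

lemma heis_group: "group heis"
proof (rule groupI)
  fix x y z :: "int \<times> int \<times> int"
  show "x \<otimes>\<^bsub>heis\<^esub> y \<otimes>\<^bsub>heis\<^esub> z = x \<otimes>\<^bsub>heis\<^esub> (y \<otimes>\<^bsub>heis\<^esub> z)"
    by (cases x; cases y; cases z) (simp add: algebra_simps)
next
  fix x :: "int \<times> int \<times> int"
  obtain m n k where "x = (m, n, k)" by (cases x)
  then have "(- m, - n, m * n - k) \<otimes>\<^bsub>heis\<^esub> x = \<one>\<^bsub>heis\<^esub>"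
    by (simp add: algebra_simps)
  then show "\<exists>y\<in>carrier heis. y \<otimes>\<^bsub>heis\<^esub> x = \<one>\<^bsub>heis\<^esub>" by auto
qed auto

lemma heis_inv [simp]: "inv\<^bsub>heis\<^esub> (m, n, k) = (- m, - n, m * n - k)"
  by (rule group.inv_equality[OF heis_group]) (simp_all add: algebra_simps)

lemma heis_c_eq_commutator:
  "heis_c = inv\<^bsub>heis\<^esub> heis_b \<otimes>\<^bsub>heis\<^esub> inv\<^bsub>heis\<^esub> heis_a \<otimes>\<^bsub>heis\<^esub> heis_b \<otimes>\<^bsub>heis\<^esub> heis_a"
  by (simp add: heis_a_def heis_b_def heis_c_def)

lemma heis_phi_one: "heis_phi \<one>\<^bsub>heis\<^esub> = 0"
  by (simp add: heis_phi_def)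

lemma heis_phi_mult_plus_mult_inv:
  "heis_phi (x \<otimes>\<^bsub>heis\<^esub> y) + heis_phi (x \<otimes>\<^bsub>heis\<^esub> inv\<^bsub>heis\<^esub> y) = 2 * heis_phi x"
proof -
  obtain m n k where x: "x = (m, n, k)" by (cases x)
  obtain p q l where y: "y = (p, q, l)" by (cases y)
  have "(m + p) * (n + q) - 2 * (k + l + n * p)
        + ((m - p) * (n - q) - 2 * (k + (p * q - l) - n * p)) = 2 * (m * n - 2 * k)"
    by (simp add: algebra_simps)
  then show ?thesis
    unfolding x y heis_phi_def by (simp flip: of_int_add of_int_mult)
qed

lemma heis_phi_in_J0: "heis_phi \<in> J0 heis"
  unfolding J0_def using heis_phi_mult_plus_mult_inv heis_phi_one by blast

theorem lemma3p9:
  shows "group heis \<and> heis_c = inv\<^bsub>heis\<^esub> heis_b \<otimes>\<^bsub>heis\<^esub> inv\<^bsub>heis\<^esub> heis_a \<otimes>\<^bsub>heis\<^esub> heis_b \<otimes>\<^bsub>heis\<^esub> heis_a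
         \<and> heis_phi \<one>\<^bsub>heis\<^esub> = 0 \<and> heis_phi \<in> J0 heis"
  using heis_group heis_c_eq_commutator heis_phi_one heis_phi_in_J0 by blast

end
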